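(* Let $\Bbbk$ be an algebraically closed field with $\mathrm{char}(\Bbbk)\neq 2$, let $n\ge 1$, and let $\mu=(\mu_{ij})$ with $\mu_{ij}\in\Bbbk^\times$, $\mu_{ij}\mu_{ji}=1$ for all $i,j$, and $\mu_{ii}=1$. Let $S$ be the $\Bbbk$-algebra on generators $z_1,\dots,z_n$ with defining relations $z_jz_i=\mu_{ij}z_iz_j$ for all $i,j$. Let $M_1,\dots,M_n$ be linearly independent $\mu$-symmetric $n\times n$ matrices, let $q_k=\sum_{i,j}(M_k)_{ij}z_iz_j\in S_2$, and assume the quadric system associated to $\{q_1,\dots,q_n\}$ is normalizing and base-point free. Let $A=T(V)/\langle W\rangle$ be the associated graded skew Clifford algebra written as a quadratic algebra, and let $\Gamma=\{(a,b)\in\mathbb P(S_1)\times\mathbb P(S_1): w(a\otimes b)=0\text{ for all }w\in W\}$. Then for $a,b\in S_1\setminus\{0\}$, the quadratic form $ab$ lies in $\mathbb P\big(\sum_{i=1}^n\Bbbk q_i\big)$ if and only if $(a,b)\in\Gamma$.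
   Context: A matrix $M\in M(n,\Bbbk)$ is $\mu$-symmetric if $M_{ij}=\mu_{ij}M_{ji}$ for all $i,j$. Let $U\subset T(S_1)_2=S_1\otimes S_1$ be the span of the defining relations $z_j\otimes z_i-\mu_{ij}z_i\otimes z_j$ of $S$, and let $\mathcal V(U)\subset\mathbb P(S_1^* )\times\mathbb P(S_1^* )$ be its zero locus. For $q\in S_2\setminus\{0\}$, $\mathcal V_U(q)=\mathcal V(\hat q)\cap\mathcal V(U)$ where $\hat q$ is any lift of $q$ to $S_1\otimes S_1$. The quadric system associated to $q_1,\dots,q_n$ is their span; it is normalizing if it is spanned by a normalizing sequence in $S$, and base-point free if $\bigcap_k\mathcal V_U(q_k)=\emptyset$. The graded skew Clifford algebra $A=A(\mu,M_1,\dots,M_n)$ is the graded $\Bbbk$-algebra with degree-one generators $x_1,\dots,x_n$ and degree-two generators $y_1,\dots,y_n$ with relations $x_ix_j+\mu_{ij}x_jx_i=\sum_{k}(M_k)_{ij}y_k$ for all $i,j$, together with the existence of a normalizing sequence $\{y_1',\dots,y_n'\}$ spanning $\sum_k\Bbbk y_k$. Under the stated hypotheses, $A$ is a quadratic algebra generated by $x_1,\dots,x_n$: $A=T(V)/\langle W\rangle$ where $V=S_1^*$, $\{x_i\}$ is the dual basis to $\{z_i\}$, and $W\subseteq V\otimes V$ is the space of quadratic relations, spanned by elements $\sum_{i,j}\alpha_{ijm}(x_ix_j+\mu_{ij}x_jx_i)$; its Koszul dual is $T(S_1)/\langle W^\perp\rangle=S/\langle q_1,\dots,q_n\rangle$,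 where $W^\perp\subseteq S_1\otimes S_1$ is the orthogonal complement of $W$. Here $w(a\otimes b)$ denotes the natural pairing of $w\in V\otimes V$ with $a\otimes b\in S_1\otimes S_1$. *)

theory Defs
  imports Main "HOL-Computational_Algebra.Polynomial"
begin

text \<open>Indices run over 0..n-1 (instead of 1..n). Vectors in S_1 (and in V = S_1^*)
are coefficient functions nat => 'k, only the values at i < n matter.
Tensors in S_1 (x) S_1 and in V (x) V are coefficient matrices nat => nat => 'k.\<close>

definition alg_closed :: "'k::field itself \<Rightarrow> bool" where
  "alg_closed _ \<longleftrightarrow> (\<forall>p :: 'k poly. degree p \<noteq> 0 \<longrightarrow> (\<exists>x. poly p x = 0))"

definition skew_params :: "nat \<Rightarrow> (nat \<Rightarrow> nat \<Rightarrow> 'k::field) \<Rightarrow> bool" where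
  "skew_params n \<mu> \<longleftrightarrow> (\<forall>i<n. \<forall>j<n. \<mu> i j \<noteq> 0 \<and> \<mu> i j * \<mu> j i = 1) \<and> (\<forall>i<n. \<mu> i i = 1)"

definition mu_symmetric :: "nat \<Rightarrow> (nat \<Rightarrow> nat \<Rightarrow> 'k::field) \<Rightarrow> (nat \<Rightarrow> nat \<Rightarrow> 'k) \<Rightarrow> bool" where
  "mu_symmetric n \<mu> N \<longleftrightarrow> (\<forall>i<n. \<forall>j<n. N i j = \<mu> i j * N j i)"

definition lin_indep_mats :: "nat \<Rightarrow> (nat \<Rightarrow> nat \<Rightarrow> nat \<Rightarrow> 'k::field) \<Rightarrow> bool" where
  "lin_indep_mats n M \<longleftrightarrow>
     (\<forall>c. (\<forall>i<n. \<forall>j<n. (\<Sum>k<n. c k * M k i j) = 0) \<longrightarrow> (\<forall>k<n. c k = 0))"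

text \<open>S is realised (via its PBW basis of ordered monomials z_0^a0 ... z_{n-1}^a{n-1})
as functions from exponent vectors (nat => nat) to 'k with finite support on
monomials in the variables 0..n-1.  Relation z_j z_i = mu_ij z_i z_j.\<close>

definition S_carrier :: "nat \<Rightarrow> ((nat \<Rightarrow> nat) \<Rightarrow> 'k::field) set" where
  "S_carrier n = {f. finite {\<alpha>. f \<alpha> \<noteq> 0} \<and> (\<forall>\<alpha>. f \<alpha> \<noteq> 0 \<longrightarrow> (\<forall>i\<ge>n. \<alpha> i = 0))}"

text \<open>z^alpha z^beta = twist * z^(alpha+beta): each z_j of beta moves left past each z_i of alpha
with i > j, using z_i z_j = mu_ji z_j z_i.\<close>
definition twist :: "nat \<Rightarrow> (nat \<Rightarrow> nat \<Rightarrow> 'k::field) \<Rightarrow> (nat \<Rightarrow> nat) \<Rightarrow> (nat \<Rightarrow> nat) \<Rightarrow> 'k" where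
  "twist n \<mu> \<alpha> \<beta> = (\<Prod>i<n. \<Prod>j<i. \<mu> j i ^ (\<alpha> i * \<beta> j))"

definition smult_S :: "nat \<Rightarrow> (nat \<Rightarrow> nat \<Rightarrow> 'k::field) \<Rightarrow> ((nat \<Rightarrow> nat) \<Rightarrow> 'k) \<Rightarrow> ((nat \<Rightarrow> nat) \<Rightarrow> 'k) \<Rightarrow> ((nat \<Rightarrow> nat) \<Rightarrow> 'k)" where
  "smult_S n \<mu> f g = (\<lambda>\<gamma>. \<Sum>\<alpha>\<in>{\<alpha>. \<forall>i. \<alpha> i \<le> \<gamma> i}. f \<alpha> * g (\<lambda>i. \<gamma> i - \<alpha> i) * twist n \<mu> \<alpha> (\<lambda>i. \<gamma> i - \<alpha> i))"

definition zvar :: "nat \<Rightarrow> (nat \<Rightarrow> nat) \<Rightarrow> 'k::field" where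
  "zvar i = (\<lambda>\<alpha>. if \<alpha> = (\<lambda>l. if l = i then 1 else 0) then 1 else 0)"

definition linS :: "nat \<Rightarrow> (nat \<Rightarrow> 'k::field) \<Rightarrow> (nat \<Rightarrow> nat) \<Rightarrow> 'k" where
  "linS n a = (\<lambda>\<alpha>. \<Sum>i<n. a i * zvar i \<alpha>)"

definition qS :: "nat \<Rightarrow> (nat \<Rightarrow> nat \<Rightarrow> 'k::field) \<Rightarrow> (nat \<Rightarrow> nat \<Rightarrow> 'k) \<Rightarrow> (nat \<Rightarrow> nat) \<Rightarrow> 'k" where
  "qS n \<mu> N = (\<lambda>\<gamma>. \<Sum>i<n. \<Sum>j<n. N i j * smult_S n \<mu> (zvar i) (zvar j) \<gamma>)"

definition qspan :: "nat \<Rightarrow> (nat \<Rightarrow> nat \<Rightarrow> 'k::field) \<Rightarrow> (nat \<Rightarrow> nat \<Rightarrow> nat \<Rightarrow> 'k) \<Rightarrow> ((nat \<Rightarrow> nat) \<Rightarrow> 'k) set" where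
  "qspan n \<mu> M = {f. \<exists>c. f = (\<lambda>\<gamma>. \<Sum>k<n. c k * qS n \<mu> (M k) \<gamma>)}"

inductive_set ideal_gen :: "nat \<Rightarrow> (nat \<Rightarrow> nat \<Rightarrow> 'k::field) \<Rightarrow> ((nat \<Rightarrow> nat) \<Rightarrow> 'k) set \<Rightarrow> ((nat \<Rightarrow> nat) \<Rightarrow> 'k) set"
  for n \<mu> Y where
  zero: "(\<lambda>_. 0) \<in> ideal_gen n \<mu> Y"
| gen: "y \<in> Y \<Longrightarrow> s \<in> S_carrier n \<Longrightarrow> t \<in> S_carrier n \<Longrightarrow>
          smult_S n \<mu> (smult_S n \<mu> s y) t \<in> ideal_gen n \<mu> Y"
| add: "f \<in> ideal_gen n \<mu> Y \<Longrightarrow> g \<in> ideal_gen n \<mu> Y \<Longrightarrow> (\<lambda>\<gamma>. f \<gamma> + g \<gamma>) \<in> ideal_gen n \<mu> Y"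

definition normal_mod :: "nat \<Rightarrow> (nat \<Rightarrow> nat \<Rightarrow> 'k::field) \<Rightarrow> ((nat \<Rightarrow> nat) \<Rightarrow> 'k) set \<Rightarrow> ((nat \<Rightarrow> nat) \<Rightarrow> 'k) \<Rightarrow> bool" where
  "normal_mod n \<mu> I y \<longleftrightarrow>
     (\<forall>s\<in>S_carrier n. (\<exists>t\<in>S_carrier n. (\<lambda>\<gamma>. smult_S n \<mu> y s \<gamma> - smult_S n \<mu> t y \<gamma>) \<in> I)
                     \<and> (\<exists>t\<in>S_carrier n. (\<lambda>\<gamma>. smult_S n \<mu> s y \<gamma> - smult_S n \<mu> y t \<gamma>) \<in> I))"

definition normalizing_seq :: "nat \<Rightarrow> (nat \<Rightarrow> nat \<Rightarrow> 'k::field) \<Rightarrow> ((nat \<Rightarrow> nat) \<Rightarrow> 'k) list \<Rightarrow> bool" where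
  "normalizing_seq n \<mu> ys \<longleftrightarrow> set ys \<subseteq> S_carrier n \<and>
     (\<forall>k<length ys. normal_mod n \<mu> (ideal_gen n \<mu> (set (take k ys))) (ys ! k))"

definition normalizing_qsystem :: "nat \<Rightarrow> (nat \<Rightarrow> nat \<Rightarrow> 'k::field) \<Rightarrow> (nat \<Rightarrow> nat \<Rightarrow> nat \<Rightarrow> 'k) \<Rightarrow> bool" where
  "normalizing_qsystem n \<mu> M \<longleftrightarrow>
     (\<exists>ys. length ys = n \<and> normalizing_seq n \<mu> ys \<and>
        {f. \<exists>c. f = (\<lambda>\<gamma>. \<Sum>l<n. c l * (ys ! l) \<gamma>)} = qspan n \<mu> M)"

definition nonzero_vec :: "nat \<Rightarrow> (nat \<Rightarrow> 'k::field) \<Rightarrow> bool" where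
  "nonzero_vec n p \<longleftrightarrow> (\<exists>i<n. p i \<noteq> 0)"

definition in_VU :: "nat \<Rightarrow> (nat \<Rightarrow> nat \<Rightarrow> 'k::field) \<Rightarrow> (nat \<Rightarrow> 'k) \<Rightarrow> (nat \<Rightarrow> 'k) \<Rightarrow> bool" where
  "in_VU n \<mu> p p' \<longleftrightarrow> (\<forall>i<n. \<forall>j<n. p j * p' i - \<mu> i j * p i * p' j = 0)"

text \<open>(p,p') in V_U(q) for q = sum N_ij z_i z_j, with lift sum N_ij z_i (x) z_j.\<close>
definition in_VUq :: "nat \<Rightarrow> (nat \<Rightarrow> nat \<Rightarrow> 'k::field) \<Rightarrow> (nat \<Rightarrow> nat \<Rightarrow> 'k) \<Rightarrow> (nat \<Rightarrow> 'k) \<Rightarrow> (nat \<Rightarrow> 'k) \<Rightarrow> bool" where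
  "in_VUq n \<mu> N p p' \<longleftrightarrow> (\<Sum>i<n. \<Sum>j<n. N i j * p i * p' j) = 0 \<and> in_VU n \<mu> p p'"

definition base_point_free :: "nat \<Rightarrow> (nat \<Rightarrow> nat \<Rightarrow> 'k::field) \<Rightarrow> (nat \<Rightarrow> nat \<Rightarrow> nat \<Rightarrow> 'k) \<Rightarrow> bool" where
  "base_point_free n \<mu> M \<longleftrightarrow>
     \<not> (\<exists>p p'. nonzero_vec n p \<and> nonzero_vec n p' \<and> (\<forall>k<n. in_VUq n \<mu> (M k) p p'))"

text \<open>W: elements sum_{i,j} alpha_ij (x_i x_j + mu_ij x_j x_i) of V (x) V that vanish in A, i.e.
whose image sum_k (sum_{ij} alpha_ij (M_k)_ij) y_k is zero.  Coefficient matrix w_lm of x_l x_m.\<close>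
definition Wrel :: "nat \<Rightarrow> (nat \<Rightarrow> nat \<Rightarrow> 'k::field) \<Rightarrow> (nat \<Rightarrow> nat \<Rightarrow> nat \<Rightarrow> 'k) \<Rightarrow> (nat \<Rightarrow> nat \<Rightarrow> 'k) set" where
  "Wrel n \<mu> M = {w. \<exists>\<alpha>. (\<forall>k<n. (\<Sum>i<n. \<Sum>j<n. \<alpha> i j * M k i j) = 0) \<and>
      (\<forall>l m. w l m = (if l < n \<and> m < n then \<alpha> l m + \<mu> m l * \<alpha> m l else 0))}"

text \<open>Gamma (on representatives of points of P(S_1) x P(S_1)).\<close>
definition Gamma :: "nat \<Rightarrow> (nat \<Rightarrow> nat \<Rightarrow> 'k::field) \<Rightarrow> (nat \<Rightarrow> nat \<Rightarrow> nat \<Rightarrow> 'k) \<Rightarrow> ((nat \<Rightarrow> 'k) \<times> (nat \<Rightarrow> 'k)) set" where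
  "Gamma n \<mu> M = {(a, b). nonzero_vec n a \<and> nonzero_vec n b \<and>
      (\<forall>w\<in>Wrel n \<mu> M. (\<Sum>i<n. \<Sum>j<n. w i j * a i * b j) = 0)}"

text \<open>ab (product in S) defines a point of P(sum_k k q_k): nonzero and in the span.\<close>
definition in_proj_qspan :: "nat \<Rightarrow> (nat \<Rightarrow> nat \<Rightarrow> 'k::field) \<Rightarrow> (nat \<Rightarrow> nat \<Rightarrow> nat \<Rightarrow> 'k) \<Rightarrow> (nat \<Rightarrow> 'k) \<Rightarrow> (nat \<Rightarrow> 'k) \<Rightarrow> bool" where
  "in_proj_qspan n \<mu> M a b \<longleftrightarrow>
     (let ab = smult_S n \<mu> (linS n a) (linS n b) in ab \<noteq> (\<lambda>_. 0) \<and> ab \<in> qspan n \<mu> M)"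

end

theory Submission
  imports Defs
begin

text \<open>Write ab = \<Sum> a_i b_j z_i z_j. Reading off coefficients in the ordered monomial basis
z_p z_q (p \<le> q) of S_2, a quadratic form \<Sum> X_ij z_i z_j is determined by the
\<mu>-symmetrization X_ij + \<mu>_ij X_ji of its coefficient matrix (on the diagonal this is
2 X_pp, which is where char \<noteq> 2 enters), and a \<mu>-symmetric matrix N symmetrizes to 2 N.
Hence ab lies in the span of the q_k iff the symmetrization P of a \<otimes> b lies in the span
of the M_k, which by finite-dimensional duality means that every \<alpha> annihilating all M_k
annihilates P. The element of W built from \<alpha> pairs with a \<otimes> b to exactly
\<Sum> \<alpha>_ij P_ij, so this is membership in \<Gamma>.\<close>

lemma sum_mult_eliminated:
  fixes \<alpha> u w :: "'d \<Rightarrow> 'k::field"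
  assumes "finite D" "d0 \<in> D"
  shows "(\<Sum>d\<in>D. \<alpha> d * (u d - u d0 / w d0 * w d))
       = (\<Sum>d\<in>D. (\<alpha> d - (if d = d0 then (\<Sum>e\<in>D. \<alpha> e * w e) / w d0 else 0)) * u d)"
proof -
  have "(\<Sum>d\<in>D. \<alpha> d * (u d - u d0 / w d0 * w d))
      = (\<Sum>d\<in>D. \<alpha> d * u d) - u d0 / w d0 * (\<Sum>d\<in>D. \<alpha> d * w d)"
    by (simp add: algebra_simps sum_subtractf sum_distrib_left)
  also have "\<dots> = (\<Sum>d\<in>D. (\<alpha> d - (if d = d0 then (\<Sum>e\<in>D. \<alpha> e * w e) / w d0 else 0)) * u d)"
    using assms by (simp add: left_diff_distrib sum_subtractf if_distrib[of "\<lambda>x. x * u _"]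
        cong: if_cong)
  finally show ?thesis .
qed

lemma lincomb_of_eliminated:
  fixes P w :: "'d \<Rightarrow> 'k::field" and v :: "nat \<Rightarrow> 'd \<Rightarrow> 'k"
  assumes "P d - P d0 / w d0 * w d = (\<Sum>k<m. c k * (v k d - v k d0 / w d0 * w d))"
  shows "P d = (\<Sum>k<m. c k * v k d) + (P d0 - (\<Sum>k<m. c k * v k d0)) / w d0 * w d"
proof -
  have "P d = (P d - P d0 / w d0 * w d) + P d0 / w d0 * w d" by simp
  also have "P d - P d0 / w d0 * w d = (\<Sum>k<m. c k * (v k d - v k d0 / w d0 * w d))"
    by (rule assms)
  also have "\<dots> = (\<Sum>k<m. c k * v k d) - (\<Sum>k<m. c k * v k d0) / w d0 * w d"
    by (simp add: algebra_simps sum_subtractf sum_distrib_left sum_distrib_right sum_divide_distrib)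
  also have "\<dots> + P d0 / w d0 * w d
      = (\<Sum>k<m. c k * v k d) + (P d0 - (\<Sum>k<m. c k * v k d0)) / w d0 * w d"
    by (simp add: diff_divide_distrib algebra_simps)
  finally show ?thesis .
qed

text \<open>Gaussian elimination: pivoting on a coordinate d0 with v m d0 \<noteq> 0 removes v m, and a
functional separating the reduced system is corrected at d0 (sum_mult_eliminated).\<close>

lemma in_span_or_separated:
  fixes v :: "nat \<Rightarrow> 'd \<Rightarrow> 'k::field" and P :: "'d \<Rightarrow> 'k"
  assumes "finite D"
  shows "(\<exists>c. \<forall>d\<in>D. P d = (\<Sum>k<m. c k * v k d)) \<or>
         (\<exists>\<alpha>. (\<forall>k<m. (\<Sum>d\<in>D. \<alpha> d * v k d) = 0) \<and> (\<Sum>d\<in>D. \<alpha> d * P d) \<noteq> 0)"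
proof (induction m arbitrary: v P)
  case 0
  show ?case
  proof (cases "\<forall>d\<in>D. P d = 0")
    case False
    then obtain d0 where "d0 \<in> D" "P d0 \<noteq> 0" by blast
    then have "(\<Sum>d\<in>D. (if d = d0 then 1 else 0) * P d) \<noteq> 0"
      using assms by (simp add: if_distrib[of "\<lambda>x. x * P _"] cong: if_cong)
    then show ?thesis by (intro disjI2 exI[of _ "\<lambda>d. if d = d0 then 1 else 0"]) simp
  qed simp
next
  case (Suc m)
  show ?case
  proof (cases "\<forall>d\<in>D. v m d = 0")
    case True
    from Suc.IH[of P v] show ?thesis
    proof (elim disjE exE conjE)
      fix c assume "\<forall>d\<in>D. P d = (\<Sum>k<m. c k * v k d)"
      then have "\<forall>d\<in>D. P d = (\<Sum>k<Suc m. c k * v k d)" using True by simp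
      then show ?thesis by blast
    next
      fix \<alpha> assume "\<forall>k<m. (\<Sum>d\<in>D. \<alpha> d * v k d) = 0" "(\<Sum>d\<in>D. \<alpha> d * P d) \<noteq> 0"
      moreover have "(\<Sum>d\<in>D. \<alpha> d * v m d) = 0" using True by simp
      ultimately have "\<forall>k<Suc m. (\<Sum>d\<in>D. \<alpha> d * v k d) = 0" by (simp add: less_Suc_eq)
      then show ?thesis using \<open>(\<Sum>d\<in>D. \<alpha> d * P d) \<noteq> 0\<close> by blast
    qed
  next
    case False
    then obtain d0 where d0: "d0 \<in> D" "v m d0 \<noteq> 0" by blast
    define elim where "elim u d = u d - u d0 / v m d0 * v m d" for u :: "'d \<Rightarrow> 'k" and d
    from Suc.IH[of "elim P" "\<lambda>k. elim (v k)"] show ?thesis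
    proof (elim disjE exE conjE)
      fix c assume "\<forall>d\<in>D. elim P d = (\<Sum>k<m. c k * elim (v k) d)"
      then have "P d = (\<Sum>k<m. c k * v k d) + (P d0 - (\<Sum>k<m. c k * v k d0)) / v m d0 * v m d"
        if "d \<in> D" for d
        using that unfolding elim_def by (intro lincomb_of_eliminated) blast
      then have "\<forall>d\<in>D. P d = (\<Sum>k<Suc m. (c(m := (P d0 - (\<Sum>k<m. c k * v k d0)) / v m d0)) k * v k d)"
        by simp
      then show ?thesis by blast
    next
      fix \<alpha>
      assume "\<forall>k<m. (\<Sum>d\<in>D. \<alpha> d * elim (v k) d) = 0" "(\<Sum>d\<in>D. \<alpha> d * elim P d) \<noteq> 0"
      moreover have "(\<Sum>d\<in>D. \<alpha> d * elim (v m) d) = 0" by (simp add: elim_def d0(2))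
      moreover define \<beta> where
        "\<beta> d = \<alpha> d - (if d = d0 then (\<Sum>e\<in>D. \<alpha> e * v m e) / v m d0 else 0)" for d
      ultimately have "\<forall>k<Suc m. (\<Sum>d\<in>D. \<beta> d * v k d) = 0" "(\<Sum>d\<in>D. \<beta> d * P d) \<noteq> 0"
        unfolding elim_def \<beta>_def sum_mult_eliminated[OF assms d0(1)] by (auto simp: less_Suc_eq)
      then show ?thesis by blast
    qed
  qed
qed

lemma in_span_iff_annihilated:
  fixes v :: "nat \<Rightarrow> 'd \<Rightarrow> 'k::field" and P :: "'d \<Rightarrow> 'k"
  assumes "finite D"
  shows "(\<exists>c. \<forall>d\<in>D. P d = (\<Sum>k<m. c k * v k d)) \<longleftrightarrow>
         (\<forall>\<alpha>. (\<forall>k<m. (\<Sum>d\<in>D. \<alpha> d * v k d) = 0) \<longrightarrow> (\<Sum>d\<in>D. \<alpha> d * P d) = 0)"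
proof
  assume "\<exists>c. \<forall>d\<in>D. P d = (\<Sum>k<m. c k * v k d)"
  then obtain c where c: "\<forall>d\<in>D. P d = (\<Sum>k<m. c k * v k d)" by blast
  show "\<forall>\<alpha>. (\<forall>k<m. (\<Sum>d\<in>D. \<alpha> d * v k d) = 0) \<longrightarrow> (\<Sum>d\<in>D. \<alpha> d * P d) = 0"
  proof (intro allI impI)
    fix \<alpha> assume \<alpha>: "\<forall>k<m. (\<Sum>d\<in>D. \<alpha> d * v k d) = 0"
    have "(\<Sum>d\<in>D. \<alpha> d * P d) = (\<Sum>d\<in>D. \<Sum>k<m. c k * (\<alpha> d * v k d))"
      using c by (simp add: sum_distrib_left mult_ac)
    also have "\<dots> = (\<Sum>k<m. c k * (\<Sum>d\<in>D. \<alpha> d * v k d))"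
      by (simp add: sum.swap[of _ D] sum_distrib_left)
    finally show "(\<Sum>d\<in>D. \<alpha> d * P d) = 0" using \<alpha> by simp
  qed
qed (use in_span_or_separated[OF assms] in blast)

lemma matrix_in_span_iff_annihilated:
  fixes P :: "nat \<Rightarrow> nat \<Rightarrow> 'k::field" and M :: "nat \<Rightarrow> nat \<Rightarrow> nat \<Rightarrow> 'k"
  shows "(\<exists>c. \<forall>i<n. \<forall>j<n. P i j = (\<Sum>k<m. c k * M k i j)) \<longleftrightarrow>
         (\<forall>\<alpha>. (\<forall>k<m. (\<Sum>i<n. \<Sum>j<n. \<alpha> i j * M k i j) = 0) \<longrightarrow>
               (\<Sum>i<n. \<Sum>j<n. \<alpha> i j * P i j) = 0)"
    (is "?span \<longleftrightarrow> (\<forall>\<alpha>. ?annihilates \<alpha>)")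
proof -
  let ?D = "{..<n} \<times> {..<n}"
  have "?span \<longleftrightarrow> (\<exists>c. \<forall>d\<in>?D. case_prod P d = (\<Sum>k<m. c k * case_prod (M k) d))"
    by auto
  also have "\<dots> \<longleftrightarrow> (\<forall>\<alpha>. (\<forall>k<m. (\<Sum>d\<in>?D. \<alpha> d * case_prod (M k) d) = 0) \<longrightarrow>
                         (\<Sum>d\<in>?D. \<alpha> d * case_prod P d) = 0)"
    by (rule in_span_iff_annihilated) simp
  also have "\<dots> \<longleftrightarrow> (\<forall>\<alpha>. ?annihilates (curry \<alpha>))"
    by (simp add: sum.cartesian_product case_prod_beta)
  also have "\<dots> \<longleftrightarrow> (\<forall>\<alpha>. ?annihilates \<alpha>)"
  proof (intro iffI allI)
    show "?annihilates \<alpha>" if "\<forall>\<alpha>. ?annihilates (curry \<alpha>)" for \<alpha>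
      using spec[OF that, of "case_prod \<alpha>"] by simp
  qed simp
  finally show ?thesis .
qed

lemma finite_pointwise_le:
  assumes "finite {l. \<gamma> l \<noteq> 0}"
  shows "finite {\<alpha> :: 'a \<Rightarrow> nat. \<forall>l. \<alpha> l \<le> \<gamma> l}"
proof (rule finite_subset)
  let ?S = "{l. \<gamma> l \<noteq> 0}"
  show "{\<alpha>. \<forall>l. \<alpha> l \<le> \<gamma> l}
      \<subseteq> {\<alpha>. \<forall>l. (l \<in> ?S \<longrightarrow> \<alpha> l \<in> {..Max (\<gamma> ` ?S)}) \<and> (l \<notin> ?S \<longrightarrow> \<alpha> l = 0)}"
  proof (intro subsetI CollectI allI conjI impI)
    fix \<alpha> l assume "\<alpha> \<in> {\<alpha>. \<forall>l. \<alpha> l \<le> \<gamma> l}"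
    then have le: "\<alpha> l \<le> \<gamma> l" by simp
    show "\<alpha> l \<in> {..Max (\<gamma> ` ?S)}" if "l \<in> ?S"
    proof -
      have "\<gamma> l \<le> Max (\<gamma> ` ?S)" using assms that by (intro Max_ge) simp_all
      then show ?thesis using le by simp
    qed
    show "\<alpha> l = 0" if "l \<notin> ?S"
      using le that by simp
  qed
  show "finite \<dots>"
    using assms by (intro finite_set_of_finite_funs) simp_all
qed

definition exp_pair :: "nat \<Rightarrow> nat \<Rightarrow> nat \<Rightarrow> nat" where
  "exp_pair i j = (\<lambda>l. (if l = i then 1 else 0) + (if l = j then 1 else 0))"

lemma exp_pair_eq_iff: "exp_pair i j = exp_pair p q \<longleftrightarrow> (i = p \<and> j = q) \<or> (i = q \<and> j = p)"
proof
  assume "exp_pair i j = exp_pair p q"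
  then have "exp_pair i j l = exp_pair p q l" for l by simp
  from this[of i] this[of j] this[of p] show "(i = p \<and> j = q) \<or> (i = q \<and> j = p)"
    unfolding exp_pair_def by (cases "i = p"; cases "i = q"; cases "j = p"; simp split: if_splits)
qed (auto simp: exp_pair_def)

lemma exp_pair_commute: "exp_pair i j = exp_pair j i"
  by (simp add: exp_pair_eq_iff)

lemma twist_units:
  assumes "i < n"
  shows "twist n \<mu> (\<lambda>l. if l = i then 1 else 0) (\<lambda>l. if l = j then 1 else 0)
       = (if j < i then \<mu> j i else 1)"
proof -
  have "\<mu> m l ^ ((if l = i then 1 else 0) * (if m = j then 1 else 0))
      = (if l = i then if m = j then \<mu> m l else 1 else 1)" for m l
    by simp
  then have "twist n \<mu> (\<lambda>l. if l = i then 1 else 0) (\<lambda>l. if l = j then 1 else 0)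
      = (\<Prod>l<n. \<Prod>m<l. if l = i then if m = j then \<mu> m l else 1 else 1)"
    unfolding twist_def by (simp only:)
  also have "\<dots> = (\<Prod>l<n. if l = i then \<Prod>m<l. if m = j then \<mu> m l else 1 else 1)"
    by (intro prod.cong refl) simp
  also have "\<dots> = (if j < i then \<mu> j i else 1)"
    using assms by simp
  finally show ?thesis .
qed

lemma smult_zvar_zvar:
  assumes "i < n"
  shows "smult_S n \<mu> (zvar i) (zvar j)
       = (\<lambda>\<gamma>. if \<gamma> = exp_pair i j then if j < i then \<mu> j i else 1 else 0)"
proof
  fix \<gamma> :: "nat \<Rightarrow> nat"
  define e :: "nat \<Rightarrow> nat \<Rightarrow> nat" where "e k = (\<lambda>l. if l = k then 1 else 0)" for k
  define A where "A = {\<alpha>. \<forall>l. \<alpha> l \<le> \<gamma> l}"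
  define c where "c = (if j < i then \<mu> j i else 1)"
  have "zvar i \<alpha> * zvar j (\<lambda>l. \<gamma> l - \<alpha> l) * twist n \<mu> \<alpha> (\<lambda>l. \<gamma> l - \<alpha> l)
      = (if \<alpha> = e i \<and> \<gamma> = exp_pair i j then c else 0)" if "\<alpha> \<in> A" for \<alpha>
  proof -
    have "\<gamma> l - \<alpha> l = e j l \<longleftrightarrow> \<gamma> l = \<alpha> l + e j l" for l
      using that unfolding A_def by (metis add_diff_cancel_left' le_add_diff_inverse mem_Collect_eq)
    then have "(\<lambda>l. \<gamma> l - \<alpha> l) = e j \<longleftrightarrow> \<gamma> = (\<lambda>l. \<alpha> l + e j l)"
      by (simp add: fun_eq_iff)
    then show ?thesis
      using twist_units[OF assms, of \<mu> j]
      by (auto simp: zvar_def e_def c_def exp_pair_def)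
  qed
  then have "smult_S n \<mu> (zvar i) (zvar j) \<gamma>
      = (\<Sum>\<alpha>\<in>A. if \<alpha> = e i \<and> \<gamma> = exp_pair i j then c else 0)"
    unfolding smult_S_def A_def by (intro sum.cong) simp_all
  also have "\<dots> = (if \<gamma> = exp_pair i j then c else 0)"
  proof (cases "\<gamma> = exp_pair i j")
    case True
    have "finite {l. exp_pair i j l \<noteq> 0}"
      by (rule finite_subset[of _ "{i, j}"]) (auto simp: exp_pair_def)
    then have "finite A"
      unfolding A_def True by (rule finite_pointwise_le)
    moreover have "e i \<in> A"
      unfolding A_def True by (simp add: exp_pair_def e_def)
    ultimately show ?thesis by (simp add: True)
  qed simp
  finally show "smult_S n \<mu> (zvar i) (zvar j) \<gamma>
      = (if \<gamma> = exp_pair i j then if j < i then \<mu> j i else 1 else 0)"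
    by (simp add: c_def)
qed

lemma qS_apply:
  "qS n \<mu> N \<gamma> = (\<Sum>i<n. \<Sum>j<n. if \<gamma> = exp_pair i j then N i j * (if j < i then \<mu> j i else 1) else 0)"
  unfolding qS_def by (intro sum.cong refl) (simp add: smult_zvar_zvar)

lemma qS_exp_pair:
  fixes N :: "nat \<Rightarrow> nat \<Rightarrow> 'k::field"
  assumes "p \<le> q" "q < n"
  shows "qS n \<mu> N (exp_pair p q) = N p q + (if p < q then \<mu> p q * N q p else 0)"
proof -
  have "(if exp_pair p q = exp_pair i j then N i j * (if j < i then \<mu> j i else 1) else 0)
      = (if i = p \<and> j = q then N p q else 0) + (if i = q \<and> j = p \<and> p < q then \<mu> p q * N q p else 0)"
    for i j
    using assms(1) unfolding exp_pair_eq_iff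
    by (cases "i = p"; cases "j = q"; cases "i = q"; cases "j = p"; simp)
  then have "qS n \<mu> N (exp_pair p q)
      = (\<Sum>i<n. \<Sum>j<n. if i = p \<and> j = q then N p q else 0)
      + (\<Sum>i<n. \<Sum>j<n. if i = q \<and> j = p \<and> p < q then \<mu> p q * N q p else 0)"
    by (simp only: qS_apply sum.distrib)
  also have "\<dots> = N p q + (if p < q then \<mu> p q * N q p else 0)"
  proof -
    have "(\<Sum>i<n. \<Sum>j<n. if i = i0 \<and> j = j0 then x else 0) = x"
      if "i0 < n" "j0 < n" for i0 j0 and x :: 'k
    proof -
      have "(\<Sum>j<n. if i = i0 \<and> j = j0 then x else 0) = (if i = i0 then x else 0)" for i
        using that by (cases "i = i0") simp_all
      then show ?thesis using that by simp
    qed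
    then show ?thesis using assms by simp
  qed
  finally show ?thesis .
qed

lemma qS_eqI:
  assumes "\<And>p q. p \<le> q \<Longrightarrow> q < n \<Longrightarrow> qS n \<mu> X (exp_pair p q) = qS n \<mu> Y (exp_pair p q)"
  shows "qS n \<mu> X = qS n \<mu> Y"
proof
  fix \<gamma>
  show "qS n \<mu> X \<gamma> = qS n \<mu> Y \<gamma>"
  proof (cases "\<exists>p q. p \<le> q \<and> q < n \<and> \<gamma> = exp_pair p q")
    case True
    then show ?thesis using assms by blast
  next
    case False
    have "\<gamma> \<noteq> exp_pair i j" if "i < n" "j < n" for i j
    proof (cases "i \<le> j")
      case True
      then show ?thesis using False that by blast
    next
      case False
      then show ?thesis using \<open>\<nexists>p q. _\<close> that exp_pair_commute[of i j] by auto
    qed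
    then show ?thesis by (simp add: qS_apply)
  qed
qed

lemma smult_linS_linS:
  fixes a b :: "nat \<Rightarrow> 'k::field"
  shows "smult_S n \<mu> (linS n a) (linS n b) = qS n \<mu> (\<lambda>i j. a i * b j)"
proof
  fix \<gamma> :: "nat \<Rightarrow> nat"
  define A where "A = {\<alpha>. \<forall>l. \<alpha> l \<le> \<gamma> l}"
  define Z where "Z i j \<alpha> = zvar i \<alpha> * zvar j (\<lambda>l. \<gamma> l - \<alpha> l) * twist n \<mu> \<alpha> (\<lambda>l. \<gamma> l - \<alpha> l)"
    for i j \<alpha>
  have "(\<Sum>i<n. x i) * (\<Sum>j<n. y j) * t = (\<Sum>i<n. \<Sum>j<n. x i * y j * t)"
    for x y :: "nat \<Rightarrow> 'k" and t
    unfolding sum_product by (simp only: sum_distrib_right)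
  then have "smult_S n \<mu> (linS n a) (linS n b) \<gamma> = (\<Sum>\<alpha>\<in>A. \<Sum>i<n. \<Sum>j<n. a i * b j * Z i j \<alpha>)"
    unfolding smult_S_def linS_def A_def Z_def by (simp only: mult_ac)
  also have "\<dots> = (\<Sum>i<n. \<Sum>j<n. \<Sum>\<alpha>\<in>A. a i * b j * Z i j \<alpha>)"
    by (subst sum.swap) (rule sum.cong[OF refl], rule sum.swap)
  also have "\<dots> = qS n \<mu> (\<lambda>i j. a i * b j) \<gamma>"
    by (simp add: qS_def smult_S_def A_def Z_def sum_distrib_left)
  finally show "smult_S n \<mu> (linS n a) (linS n b) \<gamma> = qS n \<mu> (\<lambda>i j. a i * b j) \<gamma>" .
qed

lemma qS_sum: "(\<lambda>\<gamma>. \<Sum>k<m. c k * qS n \<mu> (M k) \<gamma>) = qS n \<mu> (\<lambda>i j. \<Sum>k<m. c k * M k i j)"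
proof
  fix \<gamma>
  have "(\<Sum>k<m. c k * qS n \<mu> (M k) \<gamma>)
      = (\<Sum>k<m. \<Sum>i<n. \<Sum>j<n. c k * M k i j * smult_S n \<mu> (zvar i) (zvar j) \<gamma>)"
    by (simp add: qS_def sum_distrib_left mult_ac)
  also have "\<dots> = (\<Sum>i<n. \<Sum>j<n. \<Sum>k<m. c k * M k i j * smult_S n \<mu> (zvar i) (zvar j) \<gamma>)"
    by (subst sum.swap) (rule sum.cong[OF refl], rule sum.swap)
  finally show "(\<Sum>k<m. c k * qS n \<mu> (M k) \<gamma>) = qS n \<mu> (\<lambda>i j. \<Sum>k<m. c k * M k i j) \<gamma>"
    by (simp add: qS_def sum_distrib_right)
qed

definition mu_symmetrize :: "(nat \<Rightarrow> nat \<Rightarrow> 'k::field) \<Rightarrow> (nat \<Rightarrow> nat \<Rightarrow> 'k) \<Rightarrow> nat \<Rightarrow> nat \<Rightarrow> 'k" where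
  "mu_symmetrize \<mu> X i j = X i j + \<mu> i j * X j i"

lemma mu_symmetrize_swap:
  assumes "skew_params n \<mu>" "i < n" "j < n"
  shows "mu_symmetrize \<mu> X j i = \<mu> j i * mu_symmetrize \<mu> X i j"
proof -
  have "\<mu> j i * \<mu> i j = 1" using assms by (simp add: skew_params_def)
  then show ?thesis by (simp add: mu_symmetrize_def algebra_simps)
qed

lemma mu_symmetrize_mu_symmetric:
  assumes "mu_symmetric n \<mu> N" "i < n" "j < n"
  shows "mu_symmetrize \<mu> N i j = 2 * N i j"
proof -
  have "\<mu> i j * N j i = N i j"
    using assms(1)[unfolded mu_symmetric_def, rule_format, OF assms(2,3)] by simp
  then show ?thesis by (simp add: mu_symmetrize_def)
qed

lemma mu_symmetric_sum:
  assumes "\<forall>k<m. mu_symmetric n \<mu> (M k)"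
  shows "mu_symmetric n \<mu> (\<lambda>i j. \<Sum>k<m. c k * M k i j)"
  unfolding mu_symmetric_def
proof (intro allI impI)
  fix i j assume ij: "i < n" "j < n"
  have "M k i j = \<mu> i j * M k j i" if "k < m" for k
    using assms[rule_format, OF that, unfolded mu_symmetric_def, rule_format, OF ij] .
  then show "(\<Sum>k<m. c k * M k i j) = \<mu> i j * (\<Sum>k<m. c k * M k j i)"
    by (simp add: sum_distrib_left mult.left_commute)
qed

lemma qS_exp_pair_mu_symmetrize:
  assumes "skew_params n \<mu>" "p \<le> q" "q < n"
  shows "(if p = q then 2 else 1) * qS n \<mu> X (exp_pair p q) = mu_symmetrize \<mu> X p q"
proof -
  have "\<mu> p p = 1" using assms by (simp add: skew_params_def)
  then show ?thesis using assms by (cases "p = q") (simp_all add: qS_exp_pair mu_symmetrize_def)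
qed

lemma qS_eq_iff_mu_symmetrize_eq:
  fixes \<mu> X Y :: "nat \<Rightarrow> nat \<Rightarrow> 'k::field"
  assumes sp: "skew_params n \<mu>" and two: "(2::'k) \<noteq> 0"
  shows "qS n \<mu> X = qS n \<mu> Y \<longleftrightarrow> (\<forall>i<n. \<forall>j<n. mu_symmetrize \<mu> X i j = mu_symmetrize \<mu> Y i j)"
proof -
  have pair: "qS n \<mu> X (exp_pair p q) = qS n \<mu> Y (exp_pair p q)
      \<longleftrightarrow> mu_symmetrize \<mu> X p q = mu_symmetrize \<mu> Y p q" if "p \<le> q" "q < n" for p q
  proof -
    let ?c = "if p = q then 2 else (1::'k)"
    have "qS n \<mu> X (exp_pair p q) = qS n \<mu> Y (exp_pair p q)
        \<longleftrightarrow> ?c * qS n \<mu> X (exp_pair p q) = ?c * qS n \<mu> Y (exp_pair p q)"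
      by (rule mult_left_cancel[symmetric]) (use two in simp)
    then show ?thesis
      by (simp only: qS_exp_pair_mu_symmetrize[OF sp that])
  qed
  show ?thesis
  proof
    assume eq: "qS n \<mu> X = qS n \<mu> Y"
    show "\<forall>i<n. \<forall>j<n. mu_symmetrize \<mu> X i j = mu_symmetrize \<mu> Y i j"
    proof (intro allI impI)
      fix i j assume ij: "i < n" "j < n"
      show "mu_symmetrize \<mu> X i j = mu_symmetrize \<mu> Y i j"
      proof (cases "i \<le> j")
        case True
        then show ?thesis using pair ij eq by simp
      next
        case False
        then have "mu_symmetrize \<mu> X j i = mu_symmetrize \<mu> Y j i" using pair ij eq by simp
        then show ?thesis
          using mu_symmetrize_swap[OF sp ij(2,1), of X] mu_symmetrize_swap[OF sp ij(2,1), of Y]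
          by simp
      qed
    qed
  next
    assume "\<forall>i<n. \<forall>j<n. mu_symmetrize \<mu> X i j = mu_symmetrize \<mu> Y i j"
    then show "qS n \<mu> X = qS n \<mu> Y" using pair by (intro qS_eqI) simp
  qed
qed

lemma qS_in_qspan_iff:
  fixes \<mu> X :: "nat \<Rightarrow> nat \<Rightarrow> 'k::field"
  assumes sp: "skew_params n \<mu>" and two: "(2::'k) \<noteq> 0"
    and M_sym: "\<forall>k<n. mu_symmetric n \<mu> (M k)"
  shows "qS n \<mu> X \<in> qspan n \<mu> M
     \<longleftrightarrow> (\<exists>c. \<forall>i<n. \<forall>j<n. mu_symmetrize \<mu> X i j = (\<Sum>k<n. c k * M k i j))"
proof -
  have double: "2 * (\<Sum>k<n. c k * M k i j) = (\<Sum>k<n. (2 * c k) * M k i j)" for c i j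
    by (simp add: sum_distrib_left mult.assoc)
  have "qS n \<mu> X \<in> qspan n \<mu> M \<longleftrightarrow> (\<exists>c. qS n \<mu> X = qS n \<mu> (\<lambda>i j. \<Sum>k<n. c k * M k i j))"
    by (simp add: qspan_def qS_sum)
  also have "\<dots> \<longleftrightarrow> (\<exists>c. \<forall>i<n. \<forall>j<n. mu_symmetrize \<mu> X i j = (\<Sum>k<n. (2 * c k) * M k i j))"
    by (simp add: qS_eq_iff_mu_symmetrize_eq[OF sp two]
        mu_symmetrize_mu_symmetric[OF mu_symmetric_sum[OF M_sym]] double)
  also have "\<dots> \<longleftrightarrow> (\<exists>c. \<forall>i<n. \<forall>j<n. mu_symmetrize \<mu> X i j = (\<Sum>k<n. c k * M k i j))"
  proof
    assume "\<exists>c. \<forall>i<n. \<forall>j<n. mu_symmetrize \<mu> X i j = (\<Sum>k<n. (2 * c k) * M k i j)"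
    then obtain c where "\<forall>i<n. \<forall>j<n. mu_symmetrize \<mu> X i j = (\<Sum>k<n. (2 * c k) * M k i j)" ..
    then show "\<exists>c. \<forall>i<n. \<forall>j<n. mu_symmetrize \<mu> X i j = (\<Sum>k<n. c k * M k i j)"
      by (intro exI[of _ "\<lambda>k. 2 * c k"])
  next
    assume "\<exists>c. \<forall>i<n. \<forall>j<n. mu_symmetrize \<mu> X i j = (\<Sum>k<n. c k * M k i j)"
    then obtain c where "\<forall>i<n. \<forall>j<n. mu_symmetrize \<mu> X i j = (\<Sum>k<n. c k * M k i j)" ..
    then show "\<exists>c. \<forall>i<n. \<forall>j<n. mu_symmetrize \<mu> X i j = (\<Sum>k<n. (2 * c k) * M k i j)"
      using two by (intro exI[of _ "\<lambda>k. c k / 2"]) simp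
  qed
  finally show ?thesis .
qed

lemma mu_symmetrize_tensor_nonzero:
  fixes \<mu> :: "nat \<Rightarrow> nat \<Rightarrow> 'k::field"
  assumes sp: "skew_params n \<mu>" and two: "(2::'k) \<noteq> 0"
    and "nonzero_vec n a" "nonzero_vec n b"
  shows "\<exists>i<n. \<exists>j<n. mu_symmetrize \<mu> (\<lambda>i j. a i * b j) i j \<noteq> 0"
proof -
  obtain i0 where i0: "i0 < n" "a i0 \<noteq> 0" "\<forall>i<i0. a i = 0"
    using assms(3) exists_least_iff[of "\<lambda>i. i < n \<and> a i \<noteq> 0"]
    unfolding nonzero_vec_def by (metis order.strict_trans)
  obtain j0 where j0: "j0 < n" "b j0 \<noteq> 0" "\<forall>j<j0. b j = 0"
    using assms(4) exists_least_iff[of "\<lambda>j. j < n \<and> b j \<noteq> 0"]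
    unfolding nonzero_vec_def by (metis order.strict_trans)
  have "mu_symmetrize \<mu> (\<lambda>i j. a i * b j) i0 j0 \<noteq> 0"
  proof (cases "i0 = j0")
    case True
    moreover have "\<mu> i0 i0 = 1" using sp i0(1) by (simp add: skew_params_def)
    ultimately show ?thesis using i0(2) j0(2) two by (simp add: mu_symmetrize_def)
  next
    case False
    then consider "j0 < i0" | "i0 < j0" by linarith
    then show ?thesis using i0 j0 by cases (simp_all add: mu_symmetrize_def)
  qed
  then show ?thesis using i0(1) j0(1) by blast
qed

lemma smult_linS_linS_nonzero:
  fixes \<mu> :: "nat \<Rightarrow> nat \<Rightarrow> 'k::field"
  assumes "skew_params n \<mu>" "(2::'k) \<noteq> 0" "nonzero_vec n a" "nonzero_vec n b"
  shows "smult_S n \<mu> (linS n a) (linS n b) \<noteq> (\<lambda>_. 0)"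
proof -
  have "qS n \<mu> (\<lambda>_ _. 0) = (\<lambda>_. 0)" by (simp add: qS_def)
  moreover have "qS n \<mu> (\<lambda>i j. a i * b j) \<noteq> qS n \<mu> (\<lambda>_ _. 0)"
    using mu_symmetrize_tensor_nonzero[OF assms]
    by (simp add: qS_eq_iff_mu_symmetrize_eq[OF assms(1,2)] mu_symmetrize_def)
  ultimately show ?thesis by (simp add: smult_linS_linS)
qed

lemma sum_mu_symmetrize_pairing:
  fixes \<alpha> \<mu> X :: "nat \<Rightarrow> nat \<Rightarrow> 'k::field"
  shows "(\<Sum>i<n. \<Sum>j<n. (\<alpha> i j + \<mu> j i * \<alpha> j i) * X i j)
       = (\<Sum>i<n. \<Sum>j<n. \<alpha> i j * mu_symmetrize \<mu> X i j)"
proof -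
  have "(\<Sum>i<n. \<Sum>j<n. (\<alpha> i j + \<mu> j i * \<alpha> j i) * X i j)
      = (\<Sum>i<n. \<Sum>j<n. \<alpha> i j * X i j) + (\<Sum>i<n. \<Sum>j<n. \<mu> j i * \<alpha> j i * X i j)"
    by (simp add: distrib_right sum.distrib)
  also have "(\<Sum>i<n. \<Sum>j<n. \<mu> j i * \<alpha> j i * X i j) = (\<Sum>i<n. \<Sum>j<n. \<alpha> i j * (\<mu> i j * X j i))"
    by (subst sum.swap) (simp add: mult_ac)
  finally show ?thesis
    by (simp add: mu_symmetrize_def distrib_left sum.distrib)
qed

lemma mem_Gamma_iff:
  fixes \<mu> :: "nat \<Rightarrow> nat \<Rightarrow> 'k::field"
  assumes "nonzero_vec n a" "nonzero_vec n b"
  shows "(a, b) \<in> Gamma n \<mu> M \<longleftrightarrow>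
    (\<forall>\<alpha>. (\<forall>k<n. (\<Sum>i<n. \<Sum>j<n. \<alpha> i j * M k i j) = 0) \<longrightarrow>
          (\<Sum>i<n. \<Sum>j<n. \<alpha> i j * mu_symmetrize \<mu> (\<lambda>i j. a i * b j) i j) = 0)"
proof -
  define w where "w \<alpha> l m = (if l < n \<and> m < n then \<alpha> l m + \<mu> m l * \<alpha> m l else 0)" for \<alpha> l m
  have Wrel: "Wrel n \<mu> M = {w \<alpha> | \<alpha>. \<forall>k<n. (\<Sum>i<n. \<Sum>j<n. \<alpha> i j * M k i j) = 0}"
    by (auto simp: Wrel_def w_def fun_eq_iff)
  have "(\<Sum>i<n. \<Sum>j<n. w \<alpha> i j * a i * b j) = (\<Sum>i<n. \<Sum>j<n. (\<alpha> i j + \<mu> j i * \<alpha> j i) * (a i * b j))"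
    for \<alpha>
    by (intro sum.cong refl) (simp add: w_def mult.assoc)
  then have pairing: "(\<Sum>i<n. \<Sum>j<n. w \<alpha> i j * a i * b j)
      = (\<Sum>i<n. \<Sum>j<n. \<alpha> i j * mu_symmetrize \<mu> (\<lambda>i j. a i * b j) i j)" for \<alpha>
    by (simp add: sum_mu_symmetrize_pairing)
  have "(a, b) \<in> Gamma n \<mu> M \<longleftrightarrow>
    (\<forall>\<alpha>. (\<forall>k<n. (\<Sum>i<n. \<Sum>j<n. \<alpha> i j * M k i j) = 0) \<longrightarrow>
          (\<Sum>i<n. \<Sum>j<n. w \<alpha> i j * a i * b j) = 0)"
    using assms by (auto simp: Gamma_def Wrel)
  then show ?thesis
    by (simp only: pairing)
qed

theorem lemma1p9:
  fixes \<mu> :: "nat \<Rightarrow> nat \<Rightarrow> 'k::field" and M :: "nat \<Rightarrow> nat \<Rightarrow> nat \<Rightarrow> 'k"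
    and n :: nat and a b :: "nat \<Rightarrow> 'k"
  assumes "alg_closed TYPE('k)"
    and "(2::'k) \<noteq> 0"
    and "n \<ge> 1"
    and "skew_params n \<mu>"
    and "\<forall>k<n. mu_symmetric n \<mu> (M k)"
    and "lin_indep_mats n M"
    and "normalizing_qsystem n \<mu> M"
    and "base_point_free n \<mu> M"
    and "nonzero_vec n a" and "nonzero_vec n b"
  shows "in_proj_qspan n \<mu> M a b \<longleftrightarrow> (a, b) \<in> Gamma n \<mu> M"
proof -
  note two = assms(2) and sp = assms(4) and M_sym = assms(5) and a = assms(9) and b = assms(10)
  have "in_proj_qspan n \<mu> M a b \<longleftrightarrow> qS n \<mu> (\<lambda>i j. a i * b j) \<in> qspan n \<mu> M"
    using smult_linS_linS_nonzero[OF sp two a b] by (simp add: in_proj_qspan_def smult_linS_linS)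
  also have "\<dots> \<longleftrightarrow> (\<exists>c. \<forall>i<n. \<forall>j<n.
      mu_symmetrize \<mu> (\<lambda>i j. a i * b j) i j = (\<Sum>k<n. c k * M k i j))"
    by (rule qS_in_qspan_iff[OF sp two M_sym])
  also have "\<dots> \<longleftrightarrow> (\<forall>\<alpha>. (\<forall>k<n. (\<Sum>i<n. \<Sum>j<n. \<alpha> i j * M k i j) = 0) \<longrightarrow>
      (\<Sum>i<n. \<Sum>j<n. \<alpha> i j * mu_symmetrize \<mu> (\<lambda>i j. a i * b j) i j) = 0)"
    by (rule matrix_in_span_iff_annihilated)
  also have "\<dots> \<longleftrightarrow> (a, b) \<in> Gamma n \<mu> M"
    by (rule mem_Gamma_iff[OF a b, symmetric])
  finally show ?thesis .
qed

end
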